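(* Let $x,y\in\mathbb{R}[X]$ be nonzero polynomials with $\deg x=\deg y$. (a) If either $y(u)>0$ for every real root $u$ of $x$, or $y(u)<0$ for every real root $u$ of $x$, then there exists $\beta\in\Gamma$ such that $\delta=x^2+y\beta\in\Gamma^+$ and $\deg x-1\le\deg\beta\le\deg x=\deg\delta/2$. (b) If either $x(z)>0$ for every real root $z$ of $y$, or $x(z)<0$ for every real root $z$ of $y$, then there exists $\eta\in\Gamma$ such that $\delta=x\eta+y^2\in\Gamma^+$ and $\deg y-1\le\deg\eta\le\deg y=\deg\delta/2$.
   Context: $\Gamma$ denotes the set of polynomials in $\mathbb{R}[X]$ having no real root (nonzero constants included), and $\Gamma^+=\{f\in\mathbb{R}[X] : f(r)>0 \text{ for all } r\in\mathbb{R}\}$. *)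

theory Defs
  imports "HOL-Computational_Algebra.Polynomial"
begin

definition Gamma :: "real poly set" where
  "Gamma = {f. \<forall>r::real. poly f r \<noteq> 0}"

definition Gamma_plus :: "real poly set" where
  "Gamma_plus = {f. \<forall>r::real. poly f r > 0}"

end

theory Submission
  imports Defs
begin

text \<open>Take \<open>\<beta> = e (1 + X\<^sup>2)\<^sup>k\<close> with \<open>k = \<lfloor>deg x / 2\<rfloor>\<close> and \<open>e > 0\<close> small. Then \<open>y \<beta>\<close> has degree at
  most \<open>2 deg x\<close>, so for small \<open>e\<close> the sum \<open>x\<^sup>2 + y \<beta>\<close> keeps the even degree and positive leading
  coefficient of \<open>x\<^sup>2\<close> and is therefore positive outside a compact interval. Inside it,
  \<open>x\<^sup>2 \<ge> 0\<close> and \<open>y \<beta> > 0\<close> wherever \<open>x\<^sup>2\<close> vanishes, so a compactness argument makes the sum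
  positive once \<open>e\<close> is small enough. Part (b) is part (a) with \<open>x\<close> and \<open>y\<close> exchanged, and the
  sign of \<open>y\<close> at the roots of \<open>x\<close> is normalised by passing to \<open>-y\<close> and \<open>-\<beta>\<close>.\<close>

lemma poly_pos_outside_interval:
  fixes p :: "real poly"
  assumes lc: "lead_coeff p > 0" and ev: "even (degree p)"
  shows "\<exists>R. \<forall>t. \<bar>t\<bar> \<ge> R \<longrightarrow> poly p t > 0"
proof -
  obtain R1 where R1: "\<forall>t\<ge>R1. poly p t \<ge> lead_coeff p"
    using poly_pinfty_gt_lc[OF lc] by blast
  define p' where "p' = pcompose p [:0, -1:]"
  have "lead_coeff p' = lead_coeff p * (-1) ^ degree p"
    unfolding p'_def by (subst lead_coeff_comp) auto
  with ev lc have lc': "lead_coeff p' > 0" by simp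
  obtain R2 where R2: "\<forall>t\<ge>R2. poly p' t \<ge> lead_coeff p'"
    using poly_pinfty_gt_lc[OF lc'] by blast
  have "poly p t > 0" if "\<bar>t\<bar> \<ge> max 0 (max R1 R2)" for t
  proof (cases "t \<ge> 0")
    case True
    then show ?thesis using that R1 lc by force
  next
    case False
    then have "poly p' (-t) > 0" using that R2 lc' by force
    then show ?thesis by (simp add: p'_def poly_pcompose)
  qed
  then show ?thesis by blast
qed

lemma lead_coeff_add_smult_pos:
  fixes f g :: "real poly"
  assumes lc: "lead_coeff f > 0" and deg: "degree g \<le> degree f"
  shows "\<exists>\<epsilon>>0. \<forall>e. \<bar>e\<bar> \<le> \<epsilon> \<longrightarrow>
           degree (f + smult e g) = degree f \<and> lead_coeff (f + smult e g) > 0"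
proof -
  define c where "c = coeff g (degree f)"
  define \<epsilon> where "\<epsilon> = lead_coeff f / (2 * (\<bar>c\<bar> + 1))"
  have "\<epsilon> > 0" using lc by (simp add: \<epsilon>_def add_pos_nonneg)
  moreover have "degree (f + smult e g) = degree f \<and> lead_coeff (f + smult e g) > 0"
    if e: "\<bar>e\<bar> \<le> \<epsilon>" for e
  proof -
    have "\<bar>e * c\<bar> \<le> \<epsilon> * \<bar>c\<bar>" using e by (simp add: abs_mult mult_right_mono)
    also have "\<epsilon> * \<bar>c\<bar> < lead_coeff f" using lc
      by (simp add: \<epsilon>_def field_simps add_pos_nonneg) (simp add: add_nonneg_pos)
    finally have top: "coeff (f + smult e g) (degree f) > 0" by (simp add: c_def)
    have "degree (f + smult e g) \<le> degree f"
      using deg by (simp add: degree_add_le degree_smult_le order.trans)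
    moreover have "degree f \<le> degree (f + smult e g)"
      using top by (intro le_degree) simp
    ultimately show ?thesis using top by simp
  qed
  ultimately show ?thesis by blast
qed

text \<open>With \<open>m = min (f + max g 0) > 0\<close> and \<open>G = max \<bar>g\<bar>\<close> on \<open>K\<close>, any \<open>e < m / G\<close> works: where
  \<open>g < 0\<close> we have \<open>f \<ge> m\<close>, and elsewhere one of \<open>f\<close>, \<open>g\<close> is positive.\<close>

lemma compact_perturbation_pos:
  fixes f g :: "'a::topological_space \<Rightarrow> real"
  assumes K: "compact K" and cf: "continuous_on K f" and cg: "continuous_on K g"
    and f_nonneg: "\<And>t. t \<in> K \<Longrightarrow> f t \<ge> 0"
    and g_pos: "\<And>t. t \<in> K \<Longrightarrow> f t = 0 \<Longrightarrow> g t > 0"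
  shows "\<exists>e>0. \<forall>d t. 0 < d \<longrightarrow> d \<le> e \<longrightarrow> t \<in> K \<longrightarrow> f t + d * g t > 0"
proof (cases "K = {}")
  case True
  then show ?thesis by (intro exI[of _ 1]) simp
next
  case False
  define h where "h t = f t + max (g t) 0" for t
  have "continuous_on K h" unfolding h_def using cf cg by (intro continuous_intros)
  then obtain t0 where t0: "t0 \<in> K" "\<forall>t\<in>K. h t0 \<le> h t"
    using continuous_attains_inf[OF K False] by blast
  have "h t > 0" if "t \<in> K" for t
    using f_nonneg[OF that] g_pos[OF that] unfolding h_def by (cases "f t = 0") auto
  then have m: "h t0 > 0" using t0 by blast
  have "continuous_on K (\<lambda>t. \<bar>g t\<bar>)" using cg by (intro continuous_intros)
  then obtain t1 where t1: "\<forall>t\<in>K. \<bar>g t\<bar> \<le> \<bar>g t1\<bar>"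
    using continuous_attains_sup[OF K False] by blast
  define G where "G = \<bar>g t1\<bar>"
  define e where "e = h t0 / (G + 1)"
  have "e > 0" using m by (simp add: e_def G_def add_nonneg_pos)
  moreover have "f t + d * g t > 0" if d: "0 < d" "d \<le> e" and t: "t \<in> K" for d t
  proof (cases "g t < 0")
    case True
    have "d * \<bar>g t\<bar> \<le> e * G"
      using d t1 t by (intro mult_mono) (auto simp: G_def)
    also have "\<dots> < h t0" using m by (simp add: e_def G_def field_simps)
    also have "h t0 \<le> f t" using t0 t True by (force simp: h_def)
    finally show ?thesis using True by simp
  next
    case False
    then show ?thesis
      using f_nonneg[OF t] g_pos[OF t] d by (cases "f t = 0") (auto simp: add_pos_nonneg)
  qed
  ultimately show ?thesis by blast
qed

lemma real_perturbation_pos: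
  fixes f g :: "real \<Rightarrow> real"
  assumes cf: "continuous_on UNIV f" and cg: "continuous_on UNIV g"
    and f_nonneg: "\<And>t. f t \<ge> 0" and g_pos: "\<And>t. f t = 0 \<Longrightarrow> g t > 0"
    and \<epsilon>: "\<epsilon> > 0" and far: "\<And>t. \<bar>t\<bar> \<ge> R \<Longrightarrow> f t + \<epsilon> * g t > 0"
  shows "\<exists>e>0. e \<le> \<epsilon> \<and> (\<forall>t. f t + e * g t > 0)"
proof -
  obtain e0 where e0: "e0 > 0"
    and near: "\<forall>d t. 0 < d \<longrightarrow> d \<le> e0 \<longrightarrow> t \<in> {-R..R} \<longrightarrow> f t + d * g t > 0"
    using compact_perturbation_pos[OF compact_Icc
        continuous_on_subset[OF cf] continuous_on_subset[OF cg]] f_nonneg g_pos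
    by blast
  define e where "e = min e0 \<epsilon>"
  have e: "0 < e" "e \<le> \<epsilon>" "e \<le> e0" using e0 \<epsilon> by (auto simp: e_def)
  have "f t + e * g t > 0" for t
  proof (cases "\<bar>t\<bar> \<ge> R")
    case True
    \<comment> \<open>a convex combination of \<open>f t \<ge> 0\<close> and \<open>f t + \<epsilon> g t > 0\<close>\<close>
    have "f t + e * g t = (1 - e / \<epsilon>) * f t + (e / \<epsilon>) * (f t + \<epsilon> * g t)"
      using \<epsilon> by (simp add: field_simps)
    moreover have "(1 - e / \<epsilon>) * f t \<ge> 0" using e \<epsilon> f_nonneg by simp
    moreover have "(e / \<epsilon>) * (f t + \<epsilon> * g t) > 0" using e \<epsilon> far[OF True] by simp
    ultimately show ?thesis by linarith
  next
    case False
    then have "t \<in> {-R..R}" by auto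
    then show ?thesis using near e by blast
  qed
  with e show ?thesis by blast
qed

lemma square_plus_mult_Gamma_pos:
  fixes x y :: "real poly"
  assumes x0: "x \<noteq> 0" and deg: "degree x = degree y"
    and pos: "\<forall>u. poly x u = 0 \<longrightarrow> poly y u > 0"
  shows "\<exists>\<beta>\<in>Gamma. x^2 + y * \<beta> \<in> Gamma_plus \<and>
           degree x - 1 \<le> degree \<beta> \<and> degree \<beta> \<le> degree x \<and>
           2 * degree x = degree (x^2 + y * \<beta>)"
proof -
  have poly_continuous: "continuous_on UNIV (poly p)" for p :: "real poly"
    by (rule continuous_on_poly[OF continuous_on_id])
  define k where "k = degree x div 2"
  define q :: "real poly" where "q = [:1, 0, 1:] ^ k"
  have q_pos: "poly q t > 0" for t
    by (simp add: q_def add_pos_nonneg)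
  have deg_q: "degree q = 2 * k" by (simp add: q_def degree_power_eq)
  have deg_sq: "degree (x^2) = 2 * degree x" by (simp add: degree_power_eq x0)
  have "degree (y * q) \<le> degree (x^2)"
    using degree_mult_le[of y q] deg deg_q deg_sq k_def by linarith
  moreover have "lead_coeff (x^2) > 0" using x0 by (simp add: lead_coeff_power)
  ultimately obtain \<epsilon> where \<epsilon>: "\<epsilon> > 0" and lead: "\<forall>e. \<bar>e\<bar> \<le> \<epsilon> \<longrightarrow>
      degree (x^2 + smult e (y * q)) = degree (x^2) \<and> lead_coeff (x^2 + smult e (y * q)) > 0"
    using lead_coeff_add_smult_pos by blast
  have "\<bar>\<epsilon>\<bar> \<le> \<epsilon>" using \<epsilon> by simp
  then have deg_p0: "degree (x^2 + smult \<epsilon> (y * q)) = degree (x^2)"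
    and "lead_coeff (x^2 + smult \<epsilon> (y * q)) > 0"
    using lead by blast+
  moreover have "even (degree (x^2 + smult \<epsilon> (y * q)))" using deg_p0 deg_sq by simp
  ultimately obtain R where "\<forall>t. \<bar>t\<bar> \<ge> R \<longrightarrow> poly (x^2 + smult \<epsilon> (y * q)) t > 0"
    using poly_pos_outside_interval by blast
  then obtain e where e: "0 < e" "e \<le> \<epsilon>" and sum_pos: "\<forall>t. poly (x^2) t + e * poly (y * q) t > 0"
    using real_perturbation_pos[OF poly_continuous poly_continuous, of "x^2" "y * q" \<epsilon> R]
      \<epsilon> pos q_pos by auto
  define \<beta> where "\<beta> = smult e q"
  have sum_eq: "x^2 + y * \<beta> = x^2 + smult e (y * q)" by (simp add: \<beta>_def)
  have deg_\<beta>: "degree \<beta> = 2 * k" using e deg_q by (simp add: \<beta>_def)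
  have "\<beta> \<in> Gamma" using e q_pos by (simp add: Gamma_def \<beta>_def) (metis less_irrefl)
  moreover have "x^2 + y * \<beta> \<in> Gamma_plus" using sum_pos by (simp add: Gamma_plus_def sum_eq)
  moreover have "2 * degree x = degree (x^2 + y * \<beta>)" using lead e deg_sq by (simp add: sum_eq)
  ultimately show ?thesis using deg_\<beta> k_def by auto
qed

lemma square_plus_mult_Gamma:
  fixes x y :: "real poly"
  assumes x0: "x \<noteq> 0" and deg: "degree x = degree y"
    and sign: "(\<forall>u. poly x u = 0 \<longrightarrow> poly y u > 0) \<or> (\<forall>u. poly x u = 0 \<longrightarrow> poly y u < 0)"
  shows "\<exists>\<beta>\<in>Gamma. x^2 + y * \<beta> \<in> Gamma_plus \<and>
           degree x - 1 \<le> degree \<beta> \<and> degree \<beta> \<le> degree x \<and>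
           2 * degree x = degree (x^2 + y * \<beta>)"
  using sign
proof
  assume "\<forall>u. poly x u = 0 \<longrightarrow> poly y u > 0"
  then show ?thesis using square_plus_mult_Gamma_pos[OF x0 deg] by blast
next
  assume "\<forall>u. poly x u = 0 \<longrightarrow> poly y u < 0"
  then have "\<forall>u. poly x u = 0 \<longrightarrow> poly (-y) u > 0" by simp
  moreover have "degree x = degree (-y)" using deg by simp
  ultimately obtain \<beta> where "\<beta> \<in> Gamma" "x^2 + (-y) * \<beta> \<in> Gamma_plus"
      "degree x - 1 \<le> degree \<beta>" "degree \<beta> \<le> degree x" "2 * degree x = degree (x^2 + (-y) * \<beta>)"
    using square_plus_mult_Gamma_pos[OF x0] by blast
  moreover have "-\<beta> \<in> Gamma" using \<open>\<beta> \<in> Gamma\<close> by (simp add: Gamma_def)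
  ultimately show ?thesis by (intro bexI[of _ "-\<beta>"]) auto
qed

theorem lemma3p2:
  fixes x y :: "real poly"
  assumes "x \<noteq> 0" and "y \<noteq> 0" and "degree x = degree y"
  shows "(((\<forall>u. poly x u = 0 \<longrightarrow> poly y u > 0) \<or> (\<forall>u. poly x u = 0 \<longrightarrow> poly y u < 0)) \<longrightarrow>
           (\<exists>\<beta>\<in>Gamma. x^2 + y * \<beta> \<in> Gamma_plus \<and>
              degree x - 1 \<le> degree \<beta> \<and> degree \<beta> \<le> degree x \<and>
              2 * degree x = degree (x^2 + y * \<beta>))) \<and>
         (((\<forall>z. poly y z = 0 \<longrightarrow> poly x z > 0) \<or> (\<forall>z. poly y z = 0 \<longrightarrow> poly x z < 0)) \<longrightarrow>
           (\<exists>\<eta>\<in>Gamma. x * \<eta> + y^2 \<in> Gamma_plus \<and>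
              degree y - 1 \<le> degree \<eta> \<and> degree \<eta> \<le> degree y \<and>
              2 * degree y = degree (x * \<eta> + y^2)))"
  using square_plus_mult_Gamma[OF assms(1,3)] square_plus_mult_Gamma[OF assms(2) assms(3)[symmetric]]
  by (simp add: add.commute)

end
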